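(* Let $A$ be a $2\times2$ Hermitian matrix of Laurent polynomials with symmetry type $\mathrm{S}A(z)=\begin{bmatrix}1&\alpha(z)\\ \alpha^\star(z)&1\end{bmatrix}$, where either $\alpha(z)=\epsilon z^{2k+1}$ for some $\epsilon\in\{\pm1\}$, $k\in\mathbb Z$, or $\alpha(z)=z^{2k}$ for some $k\in\mathbb Z$. Suppose $\det(A)=C$ for some negative constant $C$. Then there exist a positive integer $K$ and strongly invertible $2\times2$ matrices $V^{(0)},\dots,V^{(K-1)}$ of Laurent polynomials with compatible symmetry such that $$A^{(K)}(z):=V^{(K-1)}(z)\cdots V^{(0)}(z)A(z)V^{(0)\star}(z)\cdots V^{(K-1)\star}(z)$$ satisfies: (i) all the multiplications in this product are compatible; (ii) at least one entry of $A^{(K)}$ is the zero Laurent polynomial.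
   Context: Laurent polynomials $u(z)=\sum_ku(k)z^k$ with finitely many nonzero complex coefficients. For a matrix $P(z)=\sum_kP(k)z^k$, $P^\star(z):=\sum_k\overline{P(k)}^Tz^{-k}$; Hermitian means $P^\star=P$. $u$ has symmetry of type $\epsilon z^c$ if $u(z)=\epsilon z^cu(z^{-1})$; for nonzero $u$, $\mathrm{S}u(z):=u(z)/u(z^{-1})$; zero has every type; for a type $\beta=\epsilon z^c$, $\beta^\star:=\epsilon z^{-c}$; $\mathrm{S}$ of a matrix is taken entrywise. A type means an expression $\pm z^m$, $m\in\mathbb Z$. An $r\times s$ matrix $P$ has compatible symmetry if there are types $\tau_1,\dots,\tau_r,\rho_1,\dots,\rho_s$ with each $P_{j,k}$ of type $\tau_j^{-1}\rho_k$. A product $P_1P_2\cdots P_m$ of matrices is compatible if there are type vectors $\tau^{(0)},\dots,\tau^{(m)}$ (of matching lengths) such that each entry $(P_i)_{j,k}$ has symmetry type $(\tau^{(i-1)}_j)^{-1}\tau^{(i)}_k$. A square matrix of Laurent polynomials is strongly invertible if its determinant is a nonzero monomial $cz^m$. *)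

theory Defs
  imports "HOL-Analysis.Analysis" "HOL-Computational_Algebra.Formal_Laurent_Series"
begin

text \<open>Laurent polynomials are represented as formal Laurent series over complex
numbers with only finitely many nonzero coefficients; the coefficient of z^k is fls_nth u k.\<close>

type_synonym lpoly = "complex fls"
type_synonym lmat = "complex fls ^ 2 ^ 2"

definition laurent_poly :: "lpoly \<Rightarrow> bool" where
  "laurent_poly u \<longleftrightarrow> finite {k. fls_nth u k \<noteq> 0}"

definition lmatrix :: "lmat \<Rightarrow> bool" where
  "lmatrix P \<longleftrightarrow> (\<forall>j k. laurent_poly (P $ j $ k))"

text \<open>u(z^{-1}) and the star of a scalar Laurent polynomial (meaningful for Laurent polynomials).\<close>
definition lp_refl :: "lpoly \<Rightarrow> lpoly" where
  "lp_refl u = Abs_fls (\<lambda>k. fls_nth u (- k))"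

definition lp_star :: "lpoly \<Rightarrow> lpoly" where
  "lp_star u = Abs_fls (\<lambda>k. cnj (fls_nth u (- k)))"

definition mstar :: "lmat \<Rightarrow> lmat" where
  "mstar P = (\<chi> j k. lp_star (P $ k $ j))"

text \<open>A type  e z^c  is encoded as the pair (e, c) with e \<in> {1,-1}.\<close>
type_synonym symtype = "int \<times> int"

definition valid_type :: "symtype \<Rightarrow> bool" where
  "valid_type t \<longleftrightarrow> fst t \<in> {1, -1}"

definition type_mul :: "symtype \<Rightarrow> symtype \<Rightarrow> symtype" where
  "type_mul s t = (fst s * fst t, snd s + snd t)"

definition type_inv :: "symtype \<Rightarrow> symtype" where
  "type_inv t = (fst t, - snd t)"

definition type_star :: "symtype \<Rightarrow> symtype" where
  "type_star t = (fst t, - snd t)"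

definition has_sym_type :: "lpoly \<Rightarrow> symtype \<Rightarrow> bool" where
  "has_sym_type u t \<longleftrightarrow>
     u = fls_const (of_int (fst t)) * fls_X_intpow (snd t) * lp_refl u"

definition compatible_sym :: "lmat \<Rightarrow> bool" where
  "compatible_sym P \<longleftrightarrow> (\<exists>\<tau> \<rho> :: 2 \<Rightarrow> symtype.
     (\<forall>j. valid_type (\<tau> j)) \<and> (\<forall>k. valid_type (\<rho> k)) \<and>
     (\<forall>j k. has_sym_type (P $ j $ k) (type_mul (type_inv (\<tau> j)) (\<rho> k))))"

definition compatible_product :: "lmat list \<Rightarrow> bool" where
  "compatible_product Ps \<longleftrightarrow> (\<exists>\<tau>s :: (2 \<Rightarrow> symtype) list.
     length \<tau>s = length Ps + 1 \<and>
     (\<forall>i < length \<tau>s. \<forall>j. valid_type ((\<tau>s ! i) j)) \<and>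
     (\<forall>i < length Ps. \<forall>j k.
        has_sym_type ((Ps ! i) $ j $ k) (type_mul (type_inv ((\<tau>s ! i) j)) ((\<tau>s ! (i + 1)) k))))"

definition mat_prod_list :: "lmat list \<Rightarrow> lmat" where
  "mat_prod_list Ps = foldr (\<lambda>P Q. P ** Q) Ps (mat 1)"

definition strongly_invertible :: "lmat \<Rightarrow> bool" where
  "strongly_invertible V \<longleftrightarrow> (\<exists>c m. c \<noteq> 0 \<and> det V = fls_const c * fls_X_intpow m)"

definition hermitian_l :: "lmat \<Rightarrow> bool" where
  "hermitian_l P \<longleftrightarrow> mstar P = P"

end

theory Submission
  imports Defs
begin

(* Write A = [[a, b], [b*, d]], where a, d have type 1 and b has type alpha = e z^c.
   Conjugating A by [[1, 0], [r*, 1]] or by [[1, r], [0, 1]], with r of type alpha, keeps A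
   Hermitian with the same symmetry types and determinant, and replaces b by b + a r or b + d r.
   Let ord denote the lowest exponent. Since a d - b b* is constant, comparing lowest-order
   coefficients shows 2 ord b - c <= ord a + ord d when a, b, d are all nonzero, so a or d has
   order at least ord b - c/2. The symmetric r = t z^j + e t z^(c-j), with j = ord b - ord a
   (or ord b - ord d), then cancels the lowest coefficient of b, and ord b strictly increases.
   The symmetry of b bounds 2 ord b by c, so after finitely many steps some entry vanishes. *)

unbundle fps_syntax

lemma laurent_poly_iff_bounded: "laurent_poly u \<longleftrightarrow> (\<exists>N. \<forall>k>N. u $$ k = 0)"
proof
  assume "laurent_poly u"
  then have fin: "finite {k. u $$ k \<noteq> 0}" by (simp add: laurent_poly_def)
  show "\<exists>N. \<forall>k>N. u $$ k = 0"
    by (rule exI[of _ "Max (insert 0 {k. u $$ k \<noteq> 0})"]) (use fin in \<open>auto simp: not_less\<close>)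
next
  assume "\<exists>N. \<forall>k>N. u $$ k = 0"
  then obtain N where "\<forall>k>N. u $$ k = 0" by blast
  then have "{k. u $$ k \<noteq> 0} \<subseteq> {fls_subdegree u..N}"
    using fls_subdegree_leI by (auto simp flip: not_less)
  then show "laurent_poly u" unfolding laurent_poly_def using finite_subset by blast
qed

lemma laurent_poly_0 [simp]: "laurent_poly 0"
  and laurent_poly_1 [simp]: "laurent_poly 1"
  and laurent_poly_fls_const [simp]: "laurent_poly (fls_const c)"
  by (auto simp: laurent_poly_iff_bounded)

lemma laurent_poly_fls_shift [simp]: "laurent_poly u \<Longrightarrow> laurent_poly (fls_shift m u)"
proof -
  assume "laurent_poly u"
  then obtain N where "\<forall>k>N. u $$ k = 0" by (auto simp: laurent_poly_iff_bounded)
  then have "\<forall>k>N - m. fls_shift m u $$ k = 0" by simp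
  then show ?thesis by (auto simp: laurent_poly_iff_bounded)
qed

lemma laurent_poly_add [simp]:
  "laurent_poly u \<Longrightarrow> laurent_poly v \<Longrightarrow> laurent_poly (u + v)"
  unfolding laurent_poly_iff_bounded by (metis fls_plus_nth add.right_neutral max.strict_boundedE)

lemma laurent_poly_diff [simp]:
  "laurent_poly u \<Longrightarrow> laurent_poly v \<Longrightarrow> laurent_poly (u - v)"
  unfolding laurent_poly_iff_bounded by (metis fls_minus_nth diff_0_right max.strict_boundedE)

lemma laurent_poly_mult [simp]:
  assumes "laurent_poly u" "laurent_poly v"
  shows "laurent_poly (u * v)"
proof -
  obtain M N where M: "\<And>k. k > M \<Longrightarrow> u $$ k = 0" and N: "\<And>k. k > N \<Longrightarrow> v $$ k = 0"
    using assms by (auto simp: laurent_poly_iff_bounded)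
  have "(u * v) $$ n = 0" if "n > M + N" for n
  proof -
    have "u $$ i * v $$ (n - i) = 0" for i
      using M[of i] N[of "n - i"] that by (cases "i > M") auto
    then show ?thesis by (simp add: fls_times_nth(2) sum.neutral)
  qed
  then show ?thesis by (auto simp: laurent_poly_iff_bounded)
qed

(* lp_refl and lp_star are built with Abs_fls, whose coefficients are the intended ones only
   for series that vanish at large positive exponents: hence the laurent_poly hypotheses. *)
lemma nth_Abs_fls_reflected:
  assumes "laurent_poly u" "f 0 = 0"
  shows "Abs_fls (\<lambda>k. f (u $$ (- k))) $$ k = f (u $$ (- k))"
proof -
  obtain N where "\<forall>k>N. u $$ k = 0" using assms(1) by (auto simp: laurent_poly_iff_bounded)
  then have "\<forall>\<^sub>\<infinity>n::nat. f (u $$ (- (- int n))) = 0"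
    using assms(2) by (auto simp: MOST_nat intro!: exI[of _ "nat N"])
  then show ?thesis by (simp add: Abs_fls_inverse)
qed

lemma lp_refl_nth: "laurent_poly u \<Longrightarrow> lp_refl u $$ k = u $$ (- k)"
  using nth_Abs_fls_reflected[of u "\<lambda>x. x"] by (simp add: lp_refl_def)

lemma lp_star_nth: "laurent_poly u \<Longrightarrow> lp_star u $$ k = cnj (u $$ (- k))"
  using nth_Abs_fls_reflected[of u cnj] by (simp add: lp_star_def)

lemma laurent_poly_lp_refl [simp]: "laurent_poly u \<Longrightarrow> laurent_poly (lp_refl u)"
  and laurent_poly_lp_star [simp]: "laurent_poly u \<Longrightarrow> laurent_poly (lp_star u)"
  by (auto simp: laurent_poly_iff_bounded lp_refl_nth lp_star_nth
      intro!: exI[of _ "- fls_subdegree u"])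

lemma fls_times_nth_finite_support:
  fixes f g :: "'a::{comm_monoid_add, mult_zero} fls"
  assumes "finite S" "\<And>i. f $$ i \<noteq> 0 \<Longrightarrow> i \<in> S"
  shows "(f * g) $$ n = (\<Sum>i\<in>S. f $$ i * g $$ (n - i))"
proof -
  let ?I = "{fls_subdegree f..n - fls_subdegree g}"
  have outside: "f $$ i = 0" if "i \<notin> S" for i using assms(2) that by blast
  have "(f * g) $$ n = (\<Sum>i\<in>?I. f $$ i * g $$ (n - i))"
    by (rule fls_times_nth(2))
  also have "\<dots> = (\<Sum>i\<in>S \<union> ?I. f $$ i * g $$ (n - i))"
    by (rule sum.mono_neutral_left) (auto simp: assms(1) outside not_less)
  also have "\<dots> = (\<Sum>i\<in>S. f $$ i * g $$ (n - i))"
    by (rule sum.mono_neutral_right) (auto simp: assms(1) outside)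
  finally show ?thesis .
qed

lemma lp_refl_mult:
  assumes "laurent_poly u" "laurent_poly v"
  shows "lp_refl (u * v) = lp_refl u * lp_refl v"
proof (rule fls_eqI)
  fix n
  define S where "S = {k. u $$ k \<noteq> 0}"
  have S: "finite S" using assms(1) by (simp add: S_def laurent_poly_def)
  have "lp_refl (u * v) $$ n = (\<Sum>i\<in>S. u $$ i * v $$ (- n - i))"
    using assms by (simp add: lp_refl_nth fls_times_nth_finite_support[OF S] S_def)
  also have "\<dots> = (\<Sum>i\<in>uminus ` S. u $$ (- i) * v $$ (i - n))"
    by (subst sum.reindex) (auto simp: inj_on_def intro!: sum.cong arg_cong[where f = "fls_nth v"])
  also have "\<dots> = (lp_refl u * lp_refl v) $$ n"
    using S assms by (subst fls_times_nth_finite_support[of "uminus ` S"])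
      (auto simp: lp_refl_nth S_def intro!: image_eqI[of _ _ "- i" for i])
  finally show "lp_refl (u * v) $$ n = (lp_refl u * lp_refl v) $$ n" .
qed

lemma lp_star_mult:
  assumes "laurent_poly u" "laurent_poly v"
  shows "lp_star (u * v) = lp_star u * lp_star v"
proof (rule fls_eqI)
  fix n
  have star_conv: "lp_star w $$ k = cnj (lp_refl w $$ k)" if "laurent_poly w" for w k
    using that by (simp add: lp_star_nth lp_refl_nth)
  define S where "S = {k. lp_refl u $$ k \<noteq> 0}"
  have S: "finite S" using assms(1) by (simp add: S_def laurent_poly_def[symmetric])
  have refl_supp: "lp_refl u $$ i \<noteq> 0 \<Longrightarrow> i \<in> S"
    and star_supp: "lp_star u $$ i \<noteq> 0 \<Longrightarrow> i \<in> S" for i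
    using assms(1) by (simp_all add: S_def star_conv)
  have "lp_star (u * v) $$ n = cnj ((lp_refl u * lp_refl v) $$ n)"
    using assms by (simp add: star_conv lp_refl_mult)
  also have "\<dots> = (\<Sum>i\<in>S. lp_star u $$ i * lp_star v $$ (n - i))"
    using assms by (simp add: fls_times_nth_finite_support[OF S refl_supp] star_conv)
  also have "\<dots> = (lp_star u * lp_star v) $$ n"
    by (simp add: fls_times_nth_finite_support[OF S star_supp])
  finally show "lp_star (u * v) $$ n = (lp_star u * lp_star v) $$ n" .
qed

lemma lp_star_0 [simp]: "lp_star 0 = 0"
  and lp_refl_0 [simp]: "lp_refl 0 = 0"
  and lp_star_1 [simp]: "lp_star 1 = 1"
  by (simp_all add: fls_eq_iff lp_star_nth lp_refl_nth)

lemma lp_star_add: "laurent_poly u \<Longrightarrow> laurent_poly v \<Longrightarrow> lp_star (u + v) = lp_star u + lp_star v"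
  and lp_star_diff: "laurent_poly u \<Longrightarrow> laurent_poly v \<Longrightarrow> lp_star (u - v) = lp_star u - lp_star v"
  and lp_refl_add: "laurent_poly u \<Longrightarrow> laurent_poly v \<Longrightarrow> lp_refl (u + v) = lp_refl u + lp_refl v"
  and lp_star_lp_star: "laurent_poly u \<Longrightarrow> lp_star (lp_star u) = u"
  by (simp_all add: fls_eq_iff lp_star_nth lp_refl_nth)

lemma has_sym_type_iff_nth:
  assumes "laurent_poly u"
  shows "has_sym_type u (e, c) \<longleftrightarrow> (\<forall>k. u $$ k = of_int e * u $$ (c - k))"
proof -
  have "(fls_const (of_int e) * fls_X_intpow c * lp_refl u) $$ k = of_int e * u $$ (c - k)" for k
    using assms by (simp add: mult.assoc fls_X_intpow_times_conv_shift(1) lp_refl_nth)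
  then show ?thesis by (simp add: has_sym_type_def fls_eq_iff)
qed

lemma has_sym_type_nth:
  "laurent_poly u \<Longrightarrow> has_sym_type u (e, c) \<Longrightarrow> u $$ k = of_int e * u $$ (c - k)"
  using has_sym_type_iff_nth by blast

lemma has_sym_type_0 [simp]: "has_sym_type 0 t"
  by (simp add: has_sym_type_def)

lemma has_sym_type_1: "has_sym_type 1 (1, 0)"
  by (simp add: has_sym_type_iff_nth)

lemma has_sym_type_add:
  assumes "laurent_poly u" "laurent_poly v" "has_sym_type u t" "has_sym_type v t"
  shows "has_sym_type (u + v) t"
proof -
  have "u + v = fls_const (of_int (fst t)) * fls_X_intpow (snd t) * (lp_refl u + lp_refl v)"
    using assms(3,4) unfolding has_sym_type_def by (metis distrib_left)
  then show ?thesis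
    unfolding has_sym_type_def lp_refl_add[OF assms(1,2)] .
qed

lemma has_sym_type_mult:
  assumes "laurent_poly u" "laurent_poly v" "has_sym_type u s" "has_sym_type v t"
  shows "has_sym_type (u * v) (type_mul s t)"
proof -
  let ?m = "\<lambda>t. fls_const (of_int (fst t)) * fls_X_intpow (snd t) :: lpoly"
  have m_mult: "?m s * ?m t = ?m (type_mul s t)"
    by (simp add: type_mul_def fls_X_intpow_times_fls_X_intpow mult_ac)
  have "u * v = (?m s * lp_refl u) * (?m t * lp_refl v)"
    using assms(3,4) unfolding has_sym_type_def by simp
  also have "\<dots> = ?m (type_mul s t) * lp_refl (u * v)"
    by (simp only: lp_refl_mult[OF assms(1,2)] m_mult[symmetric] mult_ac)
  finally show ?thesis
    unfolding has_sym_type_def .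
qed

lemma has_sym_type_lp_star:
  assumes "laurent_poly u" "has_sym_type u t"
  shows "has_sym_type (lp_star u) (type_star t)"
proof -
  obtain e c where t: "t = (e, c)" by fastforce
  have "lp_star u $$ k = of_int e * lp_star u $$ (- c - k)" for k
    using has_sym_type_nth[OF assms(1) assms(2)[unfolded t], of "- k"] assms(1)
    by (simp add: lp_star_nth add.commute)
  then show ?thesis
    unfolding t type_star_def fst_conv snd_conv
      has_sym_type_iff_nth[OF laurent_poly_lp_star[OF assms(1)]] by blast
qed

lemma subdegree_le_sym_center:
  assumes "laurent_poly b" "has_sym_type b (e, c)" "b \<noteq> 0"
  shows "2 * fls_subdegree b \<le> c"
proof -
  have "b $$ (c - fls_subdegree b) \<noteq> 0"
    using has_sym_type_nth[OF assms(1,2), of "fls_subdegree b"] assms(3) by auto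
  then have "fls_subdegree b \<le> c - fls_subdegree b" by (rule fls_subdegree_leI)
  then show ?thesis by simp
qed

lemma subdegree_lp_star_sym_ge:
  assumes "laurent_poly b" "has_sym_type b (e, c)" "b \<noteq> 0"
  shows "fls_subdegree b - c \<le> fls_subdegree (lp_star b)"
proof (rule fls_subdegree_geI)
  show "lp_star b \<noteq> 0"
    using assms(1,3) lp_star_lp_star by fastforce
  fix k assume "k < fls_subdegree b - c"
  then show "lp_star b $$ k = 0"
    using has_sym_type_nth[OF assms(1,2), of "- k"] assms(1) by (simp add: lp_star_nth)
qed

lemma det_const_subdegree_bound:
  fixes a b d :: lpoly
  assumes b: "laurent_poly b" "has_sym_type b (e, c)"
    and nonzero: "a \<noteq> 0" "b \<noteq> 0" "d \<noteq> 0"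
    and det: "a * d - b * lp_star b = fls_const K"
  shows "2 * fls_subdegree b - c \<le> fls_subdegree a + fls_subdegree d"
proof (rule ccontr)
  define N where "N = fls_subdegree a + fls_subdegree d"
  assume "\<not> ?thesis"
  then have N_less: "N < fls_subdegree b + fls_subdegree (lp_star b)" and "N < 0"
    using subdegree_lp_star_sym_ge[OF b nonzero(2)] subdegree_le_sym_center[OF b nonzero(2)]
    by (auto simp: N_def)
  have "(a * d) $$ N = (fls_const K + b * lp_star b) $$ N"
    using det by (simp add: algebra_simps)
  also have "\<dots> = 0"
    using \<open>N < 0\<close> fls_times_nth_eq0[OF N_less] by simp
  finally show False
    using nonzero(1,3) by (simp add: N_def)
qed

lemma exists_sym_cancelling_lowest_coeff:
  fixes a b :: lpoly
  assumes nonzero: "a \<noteq> 0" "b \<noteq> 0"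
    and e: "e \<in> {1, -1}" and parity: "odd c \<or> e = 1"
    and low: "2 * fls_subdegree b - c \<le> 2 * fls_subdegree a"
  obtains r where "laurent_poly r" "has_sym_type r (e, c)"
    "b + a * r = 0 \<or> fls_subdegree b < fls_subdegree (b + a * r)"
proof -
  define j where "j = fls_subdegree b - fls_subdegree a"
  define t where "t = - (b $$ fls_subdegree b / a $$ fls_subdegree a)"
  \<comment> \<open>If 2 j = c the two monomials coincide, and a single monomial has type e z^c only for
      e = 1: this is where the parity hypothesis enters.\<close>
  define r :: lpoly where "r = (if 2 * j = c then fls_const t * fls_X_intpow j
      else fls_const t * fls_X_intpow j + fls_const (of_int e * t) * fls_X_intpow (c - j))"
  have r_nth: "r $$ k = (if k = j then t else 0) + (if k = c - j \<and> 2 * j \<noteq> c then of_int e * t else 0)"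
    for k by (auto simp: r_def)
  have "laurent_poly r" by (simp add: r_def)
  moreover have "has_sym_type r (e, c)"
  proof -
    have "r $$ k = of_int e * r $$ (c - k)" for k
      using e parity by (auto simp: r_nth)
    then show ?thesis using has_sym_type_iff_nth[OF \<open>laurent_poly r\<close>] by blast
  qed
  moreover have "b + a * r = 0 \<or> fls_subdegree b < fls_subdegree (b + a * r)"
  proof -
    have "t \<noteq> 0" using nonzero by (simp add: t_def)
    then have "fls_subdegree r = j"
      using low by (intro fls_subdegree_eqI) (auto simp: r_nth j_def)
    then have sub_ar: "fls_subdegree a + fls_subdegree r = fls_subdegree b"
      by (simp add: j_def)
    have "(a * r) $$ fls_subdegree b = a $$ fls_subdegree a * r $$ j"
      using fls_times_base[of a r] \<open>fls_subdegree r = j\<close> by (simp add: j_def)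
    also have "\<dots> = - b $$ fls_subdegree b"
      using nonzero(1) by (simp add: r_nth t_def)
    finally have "(a * r) $$ fls_subdegree b = - b $$ fls_subdegree b" .
    then have "(b + a * r) $$ k = 0" if "k \<le> fls_subdegree b" for k
      using that fls_times_nth_eq0[of k a r] sub_ar by (cases "k = fls_subdegree b") auto
    then show ?thesis
      using fls_subdegree_geI[of "b + a * r" "fls_subdegree b + 1"] by force
  qed
  ultimately show ?thesis using that by blast
qed

lemma lmat_mult_nth: "((P::lmat) ** Q) $ i $ j = P $ i $ 1 * Q $ 1 $ j + P $ i $ 2 * Q $ 2 $ j"
  by (simp add: matrix_matrix_mult_def sum_2)

lemma mstar_nth [simp]: "mstar P $ i $ j = lp_star (P $ j $ i)"
  by (simp add: mstar_def)

lemma lmatrix_iff_entries: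
  "lmatrix P \<longleftrightarrow> laurent_poly (P $ 1 $ 1) \<and> laurent_poly (P $ 1 $ 2) \<and>
     laurent_poly (P $ 2 $ 1) \<and> laurent_poly (P $ 2 $ 2)"
  unfolding lmatrix_def forall_2 by simp

lemma lmatrix_mult: "lmatrix P \<Longrightarrow> lmatrix Q \<Longrightarrow> lmatrix (P ** Q)"
  unfolding lmatrix_def by (simp add: lmat_mult_nth)

lemma lmatrix_mstar: "lmatrix P \<Longrightarrow> lmatrix (mstar P)"
  unfolding lmatrix_def by simp

lemma lmatrix_mat_1: "lmatrix (mat 1)"
  by (simp add: lmatrix_def mat_def)

lemma mstar_mult: "lmatrix P \<Longrightarrow> lmatrix Q \<Longrightarrow> mstar (P ** Q) = mstar Q ** mstar P"
  unfolding lmatrix_iff_entries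
  by (simp add: vec_eq_iff forall_2 lmat_mult_nth lp_star_add lp_star_mult mult.commute)

lemma mstar_mstar: "lmatrix P \<Longrightarrow> mstar (mstar P) = P"
  unfolding lmatrix_iff_entries by (simp add: vec_eq_iff forall_2 lp_star_lp_star)

lemma mstar_mat_1: "mstar (mat 1) = mat 1"
  by (simp add: vec_eq_iff mat_def)

lemma det_mstar: "lmatrix P \<Longrightarrow> det (mstar P) = lp_star (det P)"
  unfolding lmatrix_iff_entries by (simp add: det_2 lp_star_diff lp_star_mult mult.commute)

definition sym_typed :: "(2 \<Rightarrow> symtype) \<Rightarrow> (2 \<Rightarrow> symtype) \<Rightarrow> lmat \<Rightarrow> bool" where
  "sym_typed \<tau> \<rho> P \<longleftrightarrow> (\<forall>j k. has_sym_type (P $ j $ k) (type_mul (type_inv (\<tau> j)) (\<rho> k)))"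

lemma type_mul_inv_cancel:
  "valid_type r \<Longrightarrow> type_mul (type_mul (type_inv t) r) (type_mul (type_inv r) s) = type_mul (type_inv t) s"
  by (auto simp: valid_type_def type_mul_def type_inv_def)

lemma sym_typed_mult:
  assumes "\<forall>i. valid_type (\<rho> i)" "lmatrix P" "lmatrix Q" "sym_typed \<tau> \<rho> P" "sym_typed \<rho> \<sigma> Q"
  shows "sym_typed \<tau> \<sigma> (P ** Q)"
  unfolding sym_typed_def
proof (intro allI)
  fix j k
  have "has_sym_type (P $ j $ l * Q $ l $ k) (type_mul (type_inv (\<tau> j)) (\<sigma> k))" for l
  proof -
    have "has_sym_type (P $ j $ l * Q $ l $ k)
        (type_mul (type_mul (type_inv (\<tau> j)) (\<rho> l)) (type_mul (type_inv (\<rho> l)) (\<sigma> k)))"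
      by (rule has_sym_type_mult) (use assms in \<open>simp_all add: lmatrix_def sym_typed_def\<close>)
    then show ?thesis using assms(1) by (simp add: type_mul_inv_cancel)
  qed
  then show "has_sym_type ((P ** Q) $ j $ k) (type_mul (type_inv (\<tau> j)) (\<sigma> k))"
    using assms(2,3) by (simp add: lmat_mult_nth has_sym_type_add lmatrix_def)
qed

lemma sym_typed_mstar:
  assumes "lmatrix P" "sym_typed \<tau> \<rho> P"
  shows "sym_typed \<rho> \<tau> (mstar P)"
  unfolding sym_typed_def mstar_nth
proof (intro allI)
  fix j k
  have "has_sym_type (lp_star (P $ k $ j)) (type_star (type_mul (type_inv (\<tau> k)) (\<rho> j)))"
    using assms by (intro has_sym_type_lp_star) (auto simp: lmatrix_def sym_typed_def)
  moreover have "type_star (type_mul (type_inv (\<tau> k)) (\<rho> j)) = type_mul (type_inv (\<rho> j)) (\<tau> k)"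
    by (simp add: type_star_def type_mul_def type_inv_def mult.commute)
  ultimately show "has_sym_type (lp_star (P $ k $ j)) (type_mul (type_inv (\<rho> j)) (\<tau> k))"
    by simp
qed

lemma sym_typed_mat_1:
  assumes "\<forall>i. valid_type (\<tau> i)"
  shows "sym_typed \<tau> \<tau> (mat 1)"
proof -
  have "type_mul (type_inv (\<tau> j)) (\<tau> j) = (1, 0)" for j
    using assms[rule_format, of j] by (auto simp: valid_type_def type_mul_def type_inv_def)
  then show ?thesis by (auto simp: sym_typed_def mat_def has_sym_type_1)
qed

lemma compatible_sym_if_sym_typed:
  "\<forall>i. valid_type (\<tau> i) \<Longrightarrow> \<forall>i. valid_type (\<rho> i) \<Longrightarrow> sym_typed \<tau> \<rho> P \<Longrightarrow> compatible_sym P"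
  unfolding compatible_sym_def sym_typed_def by blast

lemma compatible_product_if_sym_typed:
  assumes "\<forall>i. valid_type (\<tau> i)" "\<forall>P\<in>set Ps. sym_typed \<tau> \<tau> P"
  shows "compatible_product Ps"
  unfolding compatible_product_def
proof (intro exI[of _ "replicate (length Ps + 1) \<tau>"] conjI allI impI)
  fix i j k
  assume "i < length Ps"
  then have "sym_typed \<tau> \<tau> (Ps ! i)" using assms(2) by simp
  then show "has_sym_type (Ps ! i $ j $ k) (type_mul (type_inv ((replicate (length Ps + 1) \<tau> ! i) j))
      ((replicate (length Ps + 1) \<tau> ! (i + 1)) k))"
    using \<open>i < length Ps\<close> by (simp add: sym_typed_def nth_replicate del: replicate.simps)
qed (use assms(1) in \<open>auto simp: nth_replicate simp del: replicate.simps\<close>)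

definition sym_types :: "symtype \<Rightarrow> 2 \<Rightarrow> symtype" where
  "sym_types \<alpha> i = (if i = 1 then (1, 0) else \<alpha>)"

lemma valid_sym_types: "valid_type \<alpha> \<Longrightarrow> \<forall>i. valid_type (sym_types \<alpha> i)"
  by (simp add: sym_types_def valid_type_def)

lemma sym_typed_sym_types_iff:
  assumes "valid_type \<alpha>"
  shows "sym_typed (sym_types \<alpha>) (sym_types \<alpha>) P \<longleftrightarrow>
    has_sym_type (P $ 1 $ 1) (1, 0) \<and> has_sym_type (P $ 1 $ 2) \<alpha> \<and>
    has_sym_type (P $ 2 $ 1) (type_star \<alpha>) \<and> has_sym_type (P $ 2 $ 2) (1, 0)"
proof -
  have "fst \<alpha> * fst \<alpha> = 1" using assms by (auto simp: valid_type_def)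
  then show ?thesis
    by (simp add: sym_typed_def forall_2 sym_types_def type_mul_def type_inv_def type_star_def)
qed

definition upper_elem :: "lpoly \<Rightarrow> lmat" where
  "upper_elem p = vector [vector [1, p], vector [0, 1]]"

definition lower_elem :: "lpoly \<Rightarrow> lmat" where
  "lower_elem p = vector [vector [1, 0], vector [p, 1]]"

lemma upper_elem_nth [simp]:
  "upper_elem p $ 1 $ 1 = 1" "upper_elem p $ 1 $ 2 = p"
  "upper_elem p $ 2 $ 1 = 0" "upper_elem p $ 2 $ 2 = 1"
  by (simp_all add: upper_elem_def)

lemma lower_elem_nth [simp]:
  "lower_elem p $ 1 $ 1 = 1" "lower_elem p $ 1 $ 2 = 0"
  "lower_elem p $ 2 $ 1 = p" "lower_elem p $ 2 $ 2 = 1"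
  by (simp_all add: lower_elem_def)

lemma det_upper_elem: "det (upper_elem p) = 1"
  and det_lower_elem: "det (lower_elem p) = 1"
  by (simp_all add: det_2)

lemma mstar_upper_elem: "mstar (upper_elem p) = lower_elem (lp_star p)"
  and mstar_lower_elem: "mstar (lower_elem p) = upper_elem (lp_star p)"
  by (simp_all add: vec_eq_iff forall_2)

lemma lmatrix_upper_elem: "laurent_poly p \<Longrightarrow> lmatrix (upper_elem p)"
  and lmatrix_lower_elem: "laurent_poly p \<Longrightarrow> lmatrix (lower_elem p)"
  by (simp_all add: lmatrix_iff_entries)

lemma sym_typed_upper_elem:
  "valid_type \<alpha> \<Longrightarrow> has_sym_type p \<alpha> \<Longrightarrow> sym_typed (sym_types \<alpha>) (sym_types \<alpha>) (upper_elem p)"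
  and sym_typed_lower_elem:
  "valid_type \<alpha> \<Longrightarrow> has_sym_type p (type_star \<alpha>) \<Longrightarrow> sym_typed (sym_types \<alpha>) (sym_types \<alpha>) (lower_elem p)"
  by (simp_all add: sym_typed_sym_types_iff has_sym_type_1)

lemma upper_elem_conj_nth_12:
  "(upper_elem p ** A ** mstar (upper_elem p)) $ 1 $ 2 = A $ 1 $ 2 + p * A $ 2 $ 2"
  by (simp add: lmat_mult_nth mstar_upper_elem)

lemma lower_elem_conj_nth_12:
  "(lower_elem p ** A ** mstar (lower_elem p)) $ 1 $ 2 = A $ 1 $ 2 + A $ 1 $ 1 * lp_star p"
  by (simp add: lmat_mult_nth mstar_lower_elem)

definition herm_form :: "symtype \<Rightarrow> complex \<Rightarrow> lmat \<Rightarrow> bool" where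
  "herm_form \<alpha> K A \<longleftrightarrow> lmatrix A \<and> hermitian_l A \<and>
     sym_typed (sym_types \<alpha>) (sym_types \<alpha>) A \<and> det A = fls_const K"

lemma herm_form_conj:
  assumes A: "herm_form \<alpha> K A" and \<alpha>: "valid_type \<alpha>"
    and E: "lmatrix E" "det E = 1" "sym_typed (sym_types \<alpha>) (sym_types \<alpha>) E"
  shows "herm_form \<alpha> K (E ** A ** mstar E)"
proof -
  have lA: "lmatrix A" and hA: "mstar A = A" and dA: "det A = fls_const K"
    and tA: "sym_typed (sym_types \<alpha>) (sym_types \<alpha>) A"
    using A by (auto simp: herm_form_def hermitian_l_def)
  have l: "lmatrix (E ** A)" "lmatrix (mstar E)"
    using E(1) lA by (simp_all add: lmatrix_mult lmatrix_mstar)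
  have "lmatrix (E ** A ** mstar E)"
    using l by (rule lmatrix_mult)
  moreover have "hermitian_l (E ** A ** mstar E)"
    using l E(1) lA
    by (simp add: hermitian_l_def mstar_mult mstar_mstar hA matrix_mul_assoc)
  moreover have "sym_typed (sym_types \<alpha>) (sym_types \<alpha>) (E ** A ** mstar E)"
    using valid_sym_types[OF \<alpha>] E lA tA
    by (intro sym_typed_mult sym_typed_mstar lmatrix_mult lmatrix_mstar)
  moreover have "det (E ** A ** mstar E) = fls_const K"
    using E(1,2) by (simp add: det_mul det_mstar dA)
  ultimately show ?thesis by (simp add: herm_form_def)
qed

lemma herm_form_reduction_step:
  fixes A :: lmat
  assumes e: "e \<in> {1, -1}" and parity: "odd c \<or> e = 1" and A: "herm_form (e, c) K A"
    and nonzero: "A $ 1 $ 1 \<noteq> 0" "A $ 1 $ 2 \<noteq> 0" "A $ 2 $ 2 \<noteq> 0"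
  obtains E where "lmatrix E" "det E = 1" "sym_typed (sym_types (e, c)) (sym_types (e, c)) E"
    "(E ** A ** mstar E) $ 1 $ 2 = 0 \<or>
     fls_subdegree (A $ 1 $ 2) < fls_subdegree ((E ** A ** mstar E) $ 1 $ 2)"
proof -
  define a b d where "a = A $ 1 $ 1" and "b = A $ 1 $ 2" and "d = A $ 2 $ 2"
  have \<alpha>: "valid_type (e, c)" using e by (simp add: valid_type_def)
  have lb: "laurent_poly b" and sb: "has_sym_type b (e, c)"
    using A \<alpha> by (auto simp: herm_form_def lmatrix_def sym_typed_sym_types_iff b_def)
  have "A $ 2 $ 1 = lp_star b"
    using A by (metis hermitian_l_def herm_form_def mstar_nth b_def)
  then have "a * d - b * lp_star b = fls_const K"
    using A by (simp add: herm_form_def det_2 a_def b_def d_def)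
  then have "2 * fls_subdegree b - c \<le> fls_subdegree a + fls_subdegree d"
    using det_const_subdegree_bound[OF lb sb] nonzero by (simp add: a_def b_def d_def)
  then consider "2 * fls_subdegree b - c \<le> 2 * fls_subdegree a"
    | "2 * fls_subdegree b - c \<le> 2 * fls_subdegree d"
    by linarith
  then show ?thesis
  proof cases
    case 1
    then obtain r where r: "laurent_poly r" "has_sym_type r (e, c)"
      and cancel: "b + a * r = 0 \<or> fls_subdegree b < fls_subdegree (b + a * r)"
      using exists_sym_cancelling_lowest_coeff[OF _ _ e parity] nonzero
      by (metis a_def b_def)
    show ?thesis
    proof (rule that)
      show "lmatrix (lower_elem (lp_star r))" using r by (simp add: lmatrix_lower_elem)
      show "sym_typed (sym_types (e, c)) (sym_types (e, c)) (lower_elem (lp_star r))"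
        using r \<alpha> by (intro sym_typed_lower_elem has_sym_type_lp_star)
    qed (use cancel r in \<open>simp_all add: det_lower_elem lower_elem_conj_nth_12 lp_star_lp_star
         a_def b_def\<close>)
  next
    case 2
    then obtain r where r: "laurent_poly r" "has_sym_type r (e, c)"
      and cancel: "b + d * r = 0 \<or> fls_subdegree b < fls_subdegree (b + d * r)"
      using exists_sym_cancelling_lowest_coeff[OF _ _ e parity] nonzero
      by (metis b_def d_def)
    show ?thesis
    proof (rule that)
      show "lmatrix (upper_elem r)" using r by (simp add: lmatrix_upper_elem)
      show "sym_typed (sym_types (e, c)) (sym_types (e, c)) (upper_elem r)"
        using r \<alpha> by (intro sym_typed_upper_elem)
    qed (use cancel in \<open>simp_all add: det_upper_elem upper_elem_conj_nth_12 mult.commute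
         b_def d_def\<close>)
  qed
qed

lemma mat_prod_list_Cons [simp]: "mat_prod_list (P # Ps) = P ** mat_prod_list Ps"
  by (simp add: mat_prod_list_def)

lemma mat_prod_list_append: "mat_prod_list (Ps @ Qs) = mat_prod_list Ps ** mat_prod_list Qs"
  by (induction Ps) (simp_all add: mat_prod_list_def matrix_mul_assoc)

definition offdiag_defect :: "int \<Rightarrow> lmat \<Rightarrow> nat" where
  "offdiag_defect c A =
     (if A $ 1 $ 2 = 0 then 0 else nat (c - 2 * fls_subdegree (A $ 1 $ 2)) + 1)"

lemma offdiag_defect_less:
  fixes A A' :: lmat
  assumes A': "herm_form (e, c) K A'" and \<alpha>: "valid_type (e, c)" and "A $ 1 $ 2 \<noteq> 0"
    and progress: "A' $ 1 $ 2 = 0 \<or> fls_subdegree (A $ 1 $ 2) < fls_subdegree (A' $ 1 $ 2)"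
  shows "offdiag_defect c A' < offdiag_defect c A"
proof (cases "A' $ 1 $ 2 = 0")
  case False
  then have "2 * fls_subdegree (A' $ 1 $ 2) \<le> c"
    using A' \<alpha> by (intro subdegree_le_sym_center)
      (auto simp: herm_form_def lmatrix_def sym_typed_sym_types_iff)
  then show ?thesis
    using progress \<open>A $ 1 $ 2 \<noteq> 0\<close> False by (auto simp: offdiag_defect_def)
qed (use \<open>A $ 1 $ 2 \<noteq> 0\<close> in \<open>simp add: offdiag_defect_def\<close>)

lemma herm_form_conj_to_zero_entry:
  fixes A :: lmat
  assumes e: "e \<in> {1, -1}" and parity: "odd c \<or> e = 1" and "herm_form (e, c) K A"
  shows "\<exists>Vs. Vs \<noteq> [] \<and>
    (\<forall>V\<in>set Vs. lmatrix V \<and> det V = 1 \<and> sym_typed (sym_types (e, c)) (sym_types (e, c)) V) \<and>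
    (\<exists>j k. mat_prod_list (rev Vs @ [A] @ map mstar Vs) $ j $ k = 0)"
  using assms(3)
proof (induction "offdiag_defect c A" arbitrary: A rule: less_induct)
  case less
  have \<alpha>: "valid_type (e, c)" using e by (simp add: valid_type_def)
  show ?case
  proof (cases "A $ 1 $ 1 = 0 \<or> A $ 1 $ 2 = 0 \<or> A $ 2 $ 2 = 0")
    case True
    then have "\<exists>j k. mat_prod_list (rev [mat 1] @ [A] @ map mstar [mat 1]) $ j $ k = 0"
      by (auto simp: mat_prod_list_def mstar_mat_1)
    then show ?thesis
      using lmatrix_mat_1 sym_typed_mat_1[OF valid_sym_types[OF \<alpha>]]
      by (intro exI[of _ "[mat 1]"]) simp
  next
    case False
    then obtain E where E: "lmatrix E" "det E = 1" "sym_typed (sym_types (e, c)) (sym_types (e, c)) E"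
      and progress: "(E ** A ** mstar E) $ 1 $ 2 = 0 \<or>
        fls_subdegree (A $ 1 $ 2) < fls_subdegree ((E ** A ** mstar E) $ 1 $ 2)"
      using herm_form_reduction_step[OF e parity less.prems] by blast
    define A' where "A' = E ** A ** mstar E"
    have A': "herm_form (e, c) K A'"
      unfolding A'_def using herm_form_conj[OF less.prems \<alpha> E] .
    have "offdiag_defect c A' < offdiag_defect c A"
      using offdiag_defect_less[OF A' \<alpha>] progress False by (simp add: A'_def)
    then obtain Vs where Vs: "Vs \<noteq> []"
      "\<forall>V\<in>set Vs. lmatrix V \<and> det V = 1 \<and> sym_typed (sym_types (e, c)) (sym_types (e, c)) V"
      and zero: "\<exists>j k. mat_prod_list (rev Vs @ [A'] @ map mstar Vs) $ j $ k = 0"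
      using less.hyps A' by blast
    have "mat_prod_list (rev (E # Vs) @ [A] @ map mstar (E # Vs)) =
        mat_prod_list (rev Vs @ [A'] @ map mstar Vs)"
      by (simp add: A'_def mat_prod_list_append matrix_mul_assoc)
    then have "\<exists>j k. mat_prod_list (rev (E # Vs) @ [A] @ map mstar (E # Vs)) $ j $ k = 0"
      using zero by simp
    then show ?thesis
      using E Vs by (intro exI[of _ "E # Vs"]) simp
  qed
qed

theorem lemma3p7:
  fixes A :: lmat and \<alpha> :: symtype and C :: real
  assumes "lmatrix A"
    and "hermitian_l A"
    and "(\<exists>e k. e \<in> {1, -1} \<and> \<alpha> = (e, 2 * k + 1)) \<or> (\<exists>k. \<alpha> = (1, 2 * k))"
    and "has_sym_type (A $ 1 $ 1) (1, 0)"
    and "has_sym_type (A $ 1 $ 2) \<alpha>"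
    and "has_sym_type (A $ 2 $ 1) (type_star \<alpha>)"
    and "has_sym_type (A $ 2 $ 2) (1, 0)"
    and "C < 0"
    and "det A = fls_const (complex_of_real C)"
  shows "\<exists>K::nat. K > 0 \<and> (\<exists>Vs :: lmat list. length Vs = K \<and>
     (\<forall>V \<in> set Vs. lmatrix V \<and> strongly_invertible V \<and> compatible_sym V) \<and>
     compatible_product (rev Vs @ [A] @ map mstar Vs) \<and>
     (\<exists>j k. mat_prod_list (rev Vs @ [A] @ map mstar Vs) $ j $ k = 0))"
proof -
  obtain e c where \<alpha>_def: "\<alpha> = (e, c)" and e: "e \<in> {1, -1}" and parity: "odd c \<or> e = 1"
    using assms(3) by auto
  let ?\<tau> = "sym_types (e, c)"
  have valid: "\<forall>i. valid_type (?\<tau> i)"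
    using e by (intro valid_sym_types) (simp add: valid_type_def)
  have A: "herm_form (e, c) (complex_of_real C) A"
    using assms(1,2,4-7,9) e by (simp add: herm_form_def sym_typed_sym_types_iff \<alpha>_def valid_type_def)
  then obtain Vs where "Vs \<noteq> []"
    and Vs: "\<forall>V\<in>set Vs. lmatrix V \<and> det V = 1 \<and> sym_typed ?\<tau> ?\<tau> V"
    and zero: "\<exists>j k. mat_prod_list (rev Vs @ [A] @ map mstar Vs) $ j $ k = 0"
    using herm_form_conj_to_zero_entry[OF e parity] by blast
  have "\<forall>P\<in>set (rev Vs @ [A] @ map mstar Vs). sym_typed ?\<tau> ?\<tau> P"
    using Vs A by (auto simp: herm_form_def intro: sym_typed_mstar)
  then have "compatible_product (rev Vs @ [A] @ map mstar Vs)"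
    using valid by (rule compatible_product_if_sym_typed[rotated])
  moreover have "strongly_invertible V" if "det V = 1" for V
    unfolding strongly_invertible_def using that by (intro exI[of _ 1] exI[of _ 0]) simp
  ultimately show ?thesis
    using \<open>Vs \<noteq> []\<close> Vs zero valid compatible_sym_if_sym_typed
    by (intro exI[of _ "length Vs"] conjI exI[of _ Vs]) auto
qed

end
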